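(* Let $(S,\cdot)$ be a discrete semigroup, let $\mathcal{F}$ be a filter on $S$ such that $\overline{\mathcal{F}}$ is a subsemigroup of $\beta S$, let $(X,\langle T_s\rangle_{s\in S})$ be a dynamical system, and let $x,y\in X$. If $x$ and $y$ are $\mathcal{F}$-proximal, then there is a minimal left ideal $L$ of $\overline{\mathcal{F}}$ such that $T_u(x)=T_u(y)$ for all $u\in L$.
   Context: $\beta S$ is the Stone–Čech compactification of $S$ (ultrafilters on $S$) with the extended operation making it a compact right topological semigroup; $\overline{\mathcal{F}}=\bigcap_{F\in\mathcal{F}}\overline{F}$ is the set of ultrafilters containing $\mathcal{F}$. A dynamical system $(X,\langle T_s\rangle_{s\in S})$: $X$ compact Hausdorff, each $T_s$ continuous, $T_s\circ T_t=T_{st}$. For $p\in\beta S$, $T_p(x)=p\text{-}\lim_{s\in S}T_s(x)$, and $T_p\circ T_q=T_{pq}$. Points $x,y$ are $\mathcal{F}$-proximal if for every neighbourhood $U$ of the diagonal in $X\times X$ and every $F\in\mathcal{F}$ there is $s\in F$ with $(T_s(x),T_s(y))\in U$. *)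

theory Defs
  imports "HOL-Analysis.Analysis"
begin

text \<open>Points of beta S are ultrafilters on S (S = the whole type 's, discrete).
  An ultrafilter is a proper filter deciding every subset.\<close>
definition ultra :: "'s filter \<Rightarrow> bool" where
  "ultra p \<longleftrightarrow> p \<noteq> bot \<and> (\<forall>A. eventually (\<lambda>s. s \<in> A) p \<or> eventually (\<lambda>s. s \<notin> A) p)"

definition betaS :: "'s filter set" where
  "betaS = {p. ultra p}"

definition bmult :: "'s::semigroup_mult filter \<Rightarrow> 's filter \<Rightarrow> 's filter" where
  "bmult p q = Abs_filter (\<lambda>P. eventually (\<lambda>s. eventually (\<lambda>t. P (s * t)) q) p)"

text \<open>closure of a filter F: the ultrafilters containing F (p \<le> F means every F-set is a p-set).\<close>
definition Fbar :: "'s filter \<Rightarrow> 's filter set" where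
  "Fbar F = {p \<in> betaS. p \<le> F}"

definition subsemigroup :: "'s::semigroup_mult filter set \<Rightarrow> bool" where
  "subsemigroup A \<longleftrightarrow> A \<subseteq> betaS \<and> (\<forall>p\<in>A. \<forall>q\<in>A. bmult p q \<in> A)"

definition left_ideal :: "'s::semigroup_mult filter set \<Rightarrow> 's filter set \<Rightarrow> bool" where
  "left_ideal A L \<longleftrightarrow> L \<noteq> {} \<and> L \<subseteq> A \<and> (\<forall>p\<in>A. \<forall>q\<in>L. bmult p q \<in> L)"

definition minimal_left_ideal :: "'s::semigroup_mult filter set \<Rightarrow> 's filter set \<Rightarrow> bool" where
  "minimal_left_ideal A L \<longleftrightarrow> left_ideal A L \<and> (\<forall>L'. left_ideal A L' \<and> L' \<subseteq> L \<longrightarrow> L' = L)"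

definition dynamical_system :: "('s::semigroup_mult \<Rightarrow> 'x::t2_space \<Rightarrow> 'x) \<Rightarrow> bool" where
  "dynamical_system T \<longleftrightarrow> compact (UNIV :: 'x set) \<and> (\<forall>s. continuous_on UNIV (T s))
     \<and> (\<forall>s t. T s \<circ> T t = T (s * t))"

definition Tp :: "('s \<Rightarrow> 'x::t2_space \<Rightarrow> 'x) \<Rightarrow> 's filter \<Rightarrow> 'x \<Rightarrow> 'x" where
  "Tp T p x = Lim p (\<lambda>s. T s x)"

definition F_proximal :: "'s filter \<Rightarrow> ('s \<Rightarrow> 'x::topological_space \<Rightarrow> 'x) \<Rightarrow> 'x \<Rightarrow> 'x \<Rightarrow> bool" where
  "F_proximal F T x y \<longleftrightarrow> (\<forall>U. open U \<and> (\<forall>z. (z, z) \<in> U) \<longrightarrow>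
     (\<forall>A. eventually (\<lambda>s. s \<in> A) F \<longrightarrow> (\<exists>s\<in>A. (T s x, T s y) \<in> U)))"

end

theory Submission
  imports Defs
begin

(*
  Proximality yields an ultrafilter p containing F and all the sets {s. (T_s x, T_s y) \<in> U} for
  neighbourhoods U of the diagonal; since a compact Hausdorff space is regular, the two limits
  T_p x and T_p y coincide. The set (Fbar F) p is a closed left ideal of Fbar F, and by the
  compactness of \<beta>S and Zorn's lemma it contains a minimal left ideal L. Every u \<in> L has the
  form r p, so T_u x = T_r (T_p x) = T_r (T_p y) = T_u y.
*)

lemma ultra_not_bot: "ultra p \<Longrightarrow> p \<noteq> bot"
  by (simp add: ultra_def)

lemma ultra_eventually_not_iff:
  assumes "ultra p"
  shows "eventually (\<lambda>s. \<not> P s) p \<longleftrightarrow> \<not> eventually P p"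
proof -
  have "eventually P p \<or> eventually (\<lambda>s. \<not> P s) p"
    using assms unfolding ultra_def by (auto dest: spec[of _ "{s. P s}"])
  moreover have "\<not> (eventually P p \<and> eventually (\<lambda>s. \<not> P s) p)"
    using ultra_not_bot[OF assms] eventually_frequently not_frequently by blast
  ultimately show ?thesis by blast
qed

lemma ultra_filtermap: "ultra p \<Longrightarrow> ultra (filtermap f p)"
  unfolding ultra_def[of "filtermap f p"] eventually_filtermap filtermap_bot_iff
  using ultra_not_bot ultra_eventually_not_iff by blast

lemma ultra_le_if_inf_ne_bot:
  assumes "ultra p" "inf G p \<noteq> bot"
  shows "p \<le> G"
proof (rule filter_leI)
  fix P assume "eventually P G"
  show "eventually P p"
  proof (rule ccontr)
    assume "\<not> eventually P p"
    then have "eventually (\<lambda>s. \<not> P s) p" using ultra_eventually_not_iff[OF assms(1)] by blast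
    with \<open>eventually P G\<close> have "eventually (\<lambda>s. False) (inf G p)"
      unfolding eventually_inf by blast
    with assms(2) show False by (simp add: eventually_False)
  qed
qed

lemma ultra_le_imp_eq: "ultra p \<Longrightarrow> q \<noteq> bot \<Longrightarrow> q \<le> p \<Longrightarrow> q = p"
  using ultra_le_if_inf_ne_bot[of p q] by (simp add: inf_absorb1 antisym)

lemma Zorn_minimal:
  fixes A :: "'a::order set"
  assumes "A \<noteq> {}"
    and "\<And>C. C \<subseteq> A \<Longrightarrow> C \<noteq> {} \<Longrightarrow> (\<forall>a\<in>C. \<forall>b\<in>C. a \<le> b \<or> b \<le> a) \<Longrightarrow> \<exists>l\<in>A. \<forall>c\<in>C. l \<le> c"
  shows "\<exists>m\<in>A. \<forall>a\<in>A. a \<le> m \<longrightarrow> a = m"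
proof (rule predicate_Zorn)
  show "partial_order_on A (relation_of (\<lambda>a b. b \<le> a) A)"
    by (rule partial_order_on_relation_ofI) auto
  fix C assume "C \<in> Chains (relation_of (\<lambda>a b. b \<le> a) A)"
  then have "C \<subseteq> A" "\<forall>a\<in>C. \<forall>b\<in>C. a \<le> b \<or> b \<le> a"
    unfolding Chains_def relation_of_def by auto
  then show "\<exists>l\<in>A. \<forall>c\<in>C. c \<ge> l"
    using assms by (cases "C = {}") blast+
qed

lemma ultra_exists_le:
  fixes G :: "'a filter"
  assumes "G \<noteq> bot"
  obtains p where "ultra p" "p \<le> G"
proof -
  let ?A = "{p. p \<noteq> bot \<and> p \<le> G}"
  have "\<exists>m\<in>?A. \<forall>a\<in>?A. a \<le> m \<longrightarrow> a = m"
  proof (rule Zorn_minimal)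
    fix C assume C: "C \<subseteq> ?A" "C \<noteq> {}" and chain: "\<forall>a\<in>C. \<forall>b\<in>C. a \<le> b \<or> b \<le> a"
    have "eventually P (Inf C) \<longleftrightarrow> (\<exists>c\<in>C. eventually P c)" for P
    proof (rule eventually_Inf_base[OF C(2)])
      fix a b assume "a \<in> C" "b \<in> C"
      then show "\<exists>c\<in>C. c \<le> inf a b"
        using chain by (metis inf.absorb1 inf.absorb2)
    qed
    then have "Inf C \<noteq> bot"
      using C(1) by (auto simp flip: eventually_False)
    moreover have "Inf C \<le> G"
    proof -
      obtain c where "c \<in> C" using C(2) by blast
      then show ?thesis using C(1) by (blast intro: Inf_lower order_trans)
    qed
    ultimately show "\<exists>l\<in>?A. \<forall>c\<in>C. l \<le> c" by (auto intro: Inf_lower)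
  qed (use assms in auto)
  then obtain m where m: "m \<noteq> bot" "m \<le> G" and min: "\<And>a. a \<noteq> bot \<Longrightarrow> a \<le> G \<Longrightarrow> a \<le> m \<Longrightarrow> a = m"
    by auto
  have "ultra m"
    unfolding ultra_def
  proof (intro conjI allI m(1))
    fix A
    show "eventually (\<lambda>s. s \<in> A) m \<or> eventually (\<lambda>s. s \<notin> A) m"
    proof (rule disjCI)
      assume "\<not> eventually (\<lambda>s. s \<notin> A) m"
      then have "inf m (principal A) \<noteq> bot"
        by (simp flip: eventually_False add: eventually_inf_principal)
      then have "inf m (principal A) = m"
        using m(2) by (intro min) (auto intro: le_infI1)
      moreover have "eventually (\<lambda>s. s \<in> A) (inf m (principal A))"
        by (simp add: eventually_inf_principal)
      ultimately show "eventually (\<lambda>s. s \<in> A) m" by simp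
    qed
  qed
  then show ?thesis using m(2) by (rule that)
qed

lemma tendsto_Lim_ultra:
  fixes f :: "'a \<Rightarrow> 'x::t2_space"
  assumes "compact (UNIV :: 'x set)" "ultra p"
  shows "(f \<longlongrightarrow> Lim p f) p"
proof -
  have "filtermap f p \<noteq> bot"
    using ultra_not_bot[OF assms(2)] by (simp add: filtermap_bot_iff)
  then obtain l where "inf (nhds l) (filtermap f p) \<noteq> bot"
    using assms(1) unfolding compact_filter by auto
  then have "(f \<longlongrightarrow> l) p"
    unfolding filterlim_def by (rule ultra_le_if_inf_ne_bot[OF ultra_filtermap[OF assms(2)]])
  with ultra_not_bot[OF assms(2)] show ?thesis
    by (simp add: tendsto_Lim)
qed

lemma compact_t2_shrink_open:
  fixes a :: "'x::t2_space"
  assumes "compact (UNIV :: 'x set)" "open V" "a \<in> V"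
  obtains A where "open A" "a \<in> A" "closure A \<subseteq> V"
proof -
  have "regular_space (euclidean :: 'x topology)"
    using assms(1) by (intro compact_Hausdorff_imp_regular_space)
      (auto simp: compact_space_def Hausdorff_space_def disjnt_def separation_t2)
  moreover have "closedin euclidean (- V) \<and> a \<in> topspace euclidean - (- V)"
    using assms(2,3) by auto
  ultimately obtain A where "open A" "a \<in> A" "disjnt (- V) (closure A)"
    unfolding regular_space by auto
  then show ?thesis
    using that by (auto simp: disjnt_def)
qed

definition near_diagonal :: "('a \<Rightarrow> 'x::topological_space) \<Rightarrow> ('a \<Rightarrow> 'x) \<Rightarrow> 'a filter" where
  "near_diagonal f g = (INF U\<in>{U. open U \<and> (\<forall>z. (z, z) \<in> U)}. principal {s. (f s, g s) \<in> U})"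

lemma eventually_near_diagonal:
  fixes f g :: "'a \<Rightarrow> 'x::topological_space"
  shows "eventually P (near_diagonal f g) \<longleftrightarrow> (\<exists>U. open U \<and> (\<forall>z. (z, z) \<in> U) \<and> (\<forall>s. (f s, g s) \<in> U \<longrightarrow> P s))"
  unfolding near_diagonal_def
proof (subst eventually_INF_base)
  fix U V :: "('x \<times> 'x) set"
  assume "U \<in> {U. open U \<and> (\<forall>z. (z, z) \<in> U)}" "V \<in> {U. open U \<and> (\<forall>z. (z, z) \<in> U)}"
  then show "\<exists>W\<in>{U. open U \<and> (\<forall>z. (z, z) \<in> U)}.
      principal {s. (f s, g s) \<in> W} \<le> inf (principal {s. (f s, g s) \<in> U}) (principal {s. (f s, g s) \<in> V})"
    by (intro bexI[of _ "U \<inter> V"]) auto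
qed (auto simp: eventually_principal)

lemma compact_t2_separated_closures:
  fixes a b :: "'x::t2_space"
  assumes "compact (UNIV :: 'x set)" "a \<noteq> b"
  obtains A B where "open A" "open B" "a \<in> A" "b \<in> B" "closure A \<inter> closure B = {}"
proof -
  obtain V W where "open V" "open W" "a \<in> V" "b \<in> W" "V \<inter> W = {}"
    using hausdorff[OF assms(2)] by blast
  moreover obtain A where "open A" "a \<in> A" "closure A \<subseteq> V"
    using compact_t2_shrink_open[OF assms(1) \<open>open V\<close> \<open>a \<in> V\<close>] .
  moreover obtain B where "open B" "b \<in> B" "closure B \<subseteq> W"
    using compact_t2_shrink_open[OF assms(1) \<open>open W\<close> \<open>b \<in> W\<close>] .
  ultimately show ?thesis using that by blast
qed

lemma tendsto_unique_near_diagonal: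
  fixes f g :: "'a \<Rightarrow> 'x::t2_space"
  assumes "compact (UNIV :: 'x set)" "F \<noteq> bot" "F \<le> near_diagonal f g"
    and "(f \<longlongrightarrow> a) F" "(g \<longlongrightarrow> b) F"
  shows "a = b"
proof (rule ccontr)
  assume "a \<noteq> b"
  then obtain A B where AB: "open A" "open B" "a \<in> A" "b \<in> B" "closure A \<inter> closure B = {}"
    by (rule compact_t2_separated_closures[OF assms(1)])
  let ?U = "- (closure A \<times> closure B)"
  have "eventually (\<lambda>s. (f s, g s) \<in> ?U) (near_diagonal f g)"
    unfolding eventually_near_diagonal using AB(5)
    by (intro exI[of _ ?U]) (auto intro: open_Compl closed_Times)
  then have "eventually (\<lambda>s. (f s, g s) \<in> ?U) F"
    using assms(3) by (rule filter_leD[rotated])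
  moreover have "eventually (\<lambda>s. f s \<in> A) F" "eventually (\<lambda>s. g s \<in> B) F"
    using assms(4,5) AB(1-4) by (auto dest: topological_tendstoD)
  ultimately have "eventually (\<lambda>s. False) F"
    by eventually_elim (use closure_subset in blast)
  with assms(2) show False by (simp add: eventually_False)
qed

lemma eventually_bmult:
  "eventually P (bmult p q) \<longleftrightarrow> eventually (\<lambda>s. eventually (\<lambda>t. P (s * t)) q) p"
proof -
  have "is_filter (\<lambda>P. eventually (\<lambda>s. eventually (\<lambda>t. P (s * t)) q) p)"
  proof
    fix P Q
    assume "eventually (\<lambda>s. eventually (\<lambda>t. P (s * t)) q) p"
      and "eventually (\<lambda>s. eventually (\<lambda>t. Q (s * t)) q) p"
    then show "eventually (\<lambda>s. eventually (\<lambda>t. P (s * t) \<and> Q (s * t)) q) p"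
      by (rule eventually_elim2) (rule eventually_conj)
  qed (auto elim!: eventually_mono)
  then show ?thesis
    unfolding bmult_def by (rule eventually_Abs_filter)
qed

lemma bmult_assoc: "bmult (bmult p q) r = bmult p (bmult q r)"
  by (simp add: filter_eq_iff eventually_bmult mult.assoc)

lemma ultra_bmult:
  assumes p: "ultra p" and q: "ultra q"
  shows "ultra (bmult p q)"
  unfolding ultra_def
proof (intro conjI allI)
  show "bmult p q \<noteq> bot"
    using ultra_not_bot[OF p] ultra_not_bot[OF q] by (simp flip: eventually_False add: eventually_bmult)
  fix A
  show "eventually (\<lambda>s. s \<in> A) (bmult p q) \<or> eventually (\<lambda>s. s \<notin> A) (bmult p q)"
    unfolding eventually_bmult ultra_eventually_not_iff[OF q]
    by (metis ultra_eventually_not_iff[OF p])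
qed

lemma tendsto_bmult:
  assumes "\<And>s. ((\<lambda>t. f (s * t)) \<longlongrightarrow> g s) q" and "(g \<longlongrightarrow> l) p"
  shows "(f \<longlongrightarrow> l) (bmult p q)"
  unfolding tendsto_def eventually_bmult
proof (intro allI impI)
  fix V assume "open V" "l \<in> V"
  then have "eventually (\<lambda>s. g s \<in> V) p"
    by (intro topological_tendstoD[OF assms(2)])
  then show "eventually (\<lambda>s. eventually (\<lambda>t. f (s * t) \<in> V) q) p"
    by (rule eventually_mono) (use assms(1) \<open>open V\<close> in \<open>blast dest: topological_tendstoD\<close>)
qed

lemma
  fixes T :: "'s::semigroup_mult \<Rightarrow> 'x::t2_space \<Rightarrow> 'x"
  assumes "dynamical_system T"
  shows dynamical_system_compact: "compact (UNIV :: 'x set)"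
    and dynamical_system_continuous: "continuous_on UNIV (T s)"
    and dynamical_system_comp: "T s (T t x) = T (s * t) x"
  using assms unfolding dynamical_system_def by (auto simp: fun_eq_iff)

lemma Tp_tendsto:
  assumes "dynamical_system T" "ultra p"
  shows "((\<lambda>s. T s x) \<longlongrightarrow> Tp T p x) p"
  unfolding Tp_def using dynamical_system_compact[OF assms(1)] assms(2) by (rule tendsto_Lim_ultra)

lemma Tp_bmult:
  assumes T: "dynamical_system T" and p: "ultra p" and q: "ultra q"
  shows "Tp T (bmult p q) x = Tp T p (Tp T q x)"
proof -
  have "((\<lambda>t. T (s * t) x) \<longlongrightarrow> T s (Tp T q x)) q" for s
    using continuous_on_tendsto_compose[OF dynamical_system_continuous[OF T] Tp_tendsto[OF T q]]
    by (simp add: dynamical_system_comp[OF T])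
  then have "((\<lambda>u. T u x) \<longlongrightarrow> Tp T p (Tp T q x)) (bmult p q)"
    using Tp_tendsto[OF T p] by (rule tendsto_bmult)
  then show ?thesis
    unfolding Tp_def[of T "bmult p q"] using ultra_not_bot[OF ultra_bmult[OF p q]] by (intro tendsto_Lim) auto
qed

text \<open>In the filter order, \<open>Sup C\<close> consists of the sets lying in every member of \<open>C\<close>, so
  the closure of \<open>C\<close> in \<open>\<beta>S\<close> is the set of ultrafilters below \<open>Sup C\<close>.\<close>
definition closed_beta :: "'s filter set \<Rightarrow> bool" where
  "closed_beta C \<longleftrightarrow> C \<subseteq> betaS \<and> (\<forall>p\<in>betaS. p \<le> Sup C \<longrightarrow> p \<in> C)"

lemma ultra_le_Sup_imp_bex:
  assumes "ultra p" "p \<le> Sup C" "C \<subseteq> betaS" "eventually P p"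
  shows "\<exists>q\<in>C. eventually P q"
proof (rule ccontr)
  assume "\<not> (\<exists>q\<in>C. eventually P q)"
  then have "eventually (\<lambda>s. \<not> P s) (Sup C)"
    using assms(3) by (auto simp: eventually_Sup betaS_def ultra_eventually_not_iff)
  then have "eventually (\<lambda>s. \<not> P s) p"
    using assms(2) by (rule filter_leD[rotated])
  with assms(1,4) show False by (simp add: ultra_eventually_not_iff)
qed

lemma closed_beta_eventually: "closed_beta {q\<in>betaS. eventually P q}"
  unfolding closed_beta_def by (auto simp: eventually_Sup dest: filter_leD)

lemma closed_beta_Fbar: "closed_beta (Fbar F)"
  unfolding closed_beta_def Fbar_def by (auto intro: order_trans[OF _ Sup_least])

lemma closed_beta_Inter:
  assumes "\<CC> \<noteq> {}" "\<And>C. C \<in> \<CC> \<Longrightarrow> closed_beta C"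
  shows "closed_beta (\<Inter>\<CC>)"
  unfolding closed_beta_def
proof (intro conjI ballI impI)
  obtain C where "C \<in> \<CC>" using assms(1) by blast
  then show "\<Inter>\<CC> \<subseteq> betaS" using assms(2) by (auto simp: closed_beta_def)
next
  fix p assume p: "p \<in> betaS" "p \<le> Sup (\<Inter>\<CC>)"
  show "p \<in> \<Inter>\<CC>"
  proof
    fix C assume "C \<in> \<CC>"
    then have "p \<le> Sup C" using p(2) by (blast intro: order_trans Sup_subset_mono)
    with \<open>C \<in> \<CC>\<close> p(1) assms(2) show "p \<in> C" by (auto simp: closed_beta_def)
  qed
qed

lemma closed_beta_Int: "closed_beta A \<Longrightarrow> closed_beta B \<Longrightarrow> closed_beta (A \<inter> B)"
  using closed_beta_Inter[of "{A, B}"] by auto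

text \<open>This is the compactness of \<open>\<beta>S\<close>.\<close>
lemma closed_beta_directed_Inter_nonempty:
  assumes "\<CC> \<noteq> {}" "\<And>C. C \<in> \<CC> \<Longrightarrow> closed_beta C \<and> C \<noteq> {}"
    and directed: "\<And>C D. C \<in> \<CC> \<Longrightarrow> D \<in> \<CC> \<Longrightarrow> \<exists>E\<in>\<CC>. E \<subseteq> C \<inter> D"
  shows "\<Inter>\<CC> \<noteq> {}"
proof -
  define G where "G = (INF C\<in>\<CC>. Sup C)"
  have eventually_G: "eventually P G \<longleftrightarrow> (\<exists>C\<in>\<CC>. \<forall>q\<in>C. eventually P q)" for P
    unfolding G_def eventually_Sup[symmetric]
  proof (rule eventually_INF_base[OF assms(1)])
    fix C D assume "C \<in> \<CC>" "D \<in> \<CC>"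
    then obtain E where "E \<in> \<CC>" "E \<subseteq> C \<inter> D" using directed by blast
    then show "\<exists>E\<in>\<CC>. Sup E \<le> inf (Sup C) (Sup D)"
      by (intro bexI[of _ E]) (auto intro: Sup_subset_mono)
  qed
  have "G \<noteq> bot"
    using assms(2) by (force simp flip: eventually_False simp: eventually_G closed_beta_def betaS_def
        dest: ultra_not_bot)
  then obtain p where p: "ultra p" "p \<le> G" by (rule ultra_exists_le)
  have "p \<in> C" if "C \<in> \<CC>" for C
  proof -
    have "G \<le> Sup C" unfolding G_def using that by (rule INF_lower)
    with p that assms(2) show ?thesis
      unfolding closed_beta_def betaS_def by (meson mem_Collect_eq order_trans)
  qed
  then show ?thesis by blast
qed

lemma closed_beta_right_image:
  assumes C: "closed_beta C" and q: "q \<in> betaS"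
  shows "closed_beta ((\<lambda>r. bmult r q) ` C)"
  unfolding closed_beta_def
proof (intro conjI ballI impI)
  have Cb: "C \<subseteq> betaS" using C by (simp add: closed_beta_def)
  then show "(\<lambda>r. bmult r q) ` C \<subseteq> betaS"
    using q by (auto simp: betaS_def intro: ultra_bmult)
  fix p assume p: "p \<in> betaS" "p \<le> Sup ((\<lambda>r. bmult r q) ` C)"
  define D where "D P = C \<inter> {r\<in>betaS. eventually (\<lambda>s. eventually (\<lambda>t. P (s * t)) q) r}" for P
  have D_iff: "r \<in> D P \<longleftrightarrow> r \<in> C \<and> eventually P (bmult r q)" for r P
    using Cb by (auto simp: D_def eventually_bmult)
  let ?\<DD> = "D ` {P. eventually P p}"
  have "\<Inter>?\<DD> \<noteq> {}"
  proof (rule closed_beta_directed_Inter_nonempty)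
    have "D (\<lambda>_. True) \<in> ?\<DD>" by (intro imageI) simp
    then show "?\<DD> \<noteq> {}" by blast
  next
    fix X assume "X \<in> ?\<DD>"
    then obtain P where X: "X = D P" "eventually P p" by blast
    have "closed_beta X" unfolding X D_def by (intro closed_beta_Int C closed_beta_eventually)
    moreover have "X \<noteq> {}"
      using ultra_le_Sup_imp_bex[of p _ P] p X Cb q
      by (force simp: D_iff betaS_def intro: ultra_bmult)
    ultimately show "closed_beta X \<and> X \<noteq> {}" by blast
  next
    fix X Y assume "X \<in> ?\<DD>" "Y \<in> ?\<DD>"
    then obtain P Q where "X = D P" "eventually P p" "Y = D Q" "eventually Q p" by blast
    then show "\<exists>Z\<in>?\<DD>. Z \<subseteq> X \<inter> Y"
      by (intro bexI[of _ "D (\<lambda>s. P s \<and> Q s)"]) (auto simp: D_iff elim: eventually_mono intro: eventually_conj)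
  qed
  then obtain r where "r \<in> \<Inter>?\<DD>" by blast
  then have r: "\<And>P. eventually P p \<Longrightarrow> r \<in> C \<and> eventually P (bmult r q)"
    using D_iff by blast
  then have "r \<in> C" using eventually_True by blast
  have "bmult r q = p"
  proof (rule ultra_le_imp_eq)
    show "bmult r q \<noteq> bot"
      using \<open>r \<in> C\<close> Cb q by (intro ultra_not_bot ultra_bmult) (auto simp: betaS_def)
  qed (use p r in \<open>auto simp: betaS_def le_filter_def\<close>)
  with \<open>r \<in> C\<close> show "p \<in> (\<lambda>r. bmult r q) ` C" by blast
qed

lemma left_ideal_right_image:
  assumes "subsemigroup K" "q \<in> K"
  shows "left_ideal K ((\<lambda>r. bmult r q) ` K)"
  using assms unfolding left_ideal_def subsemigroup_def
  by (auto simp flip: bmult_assoc)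

lemma left_ideal_Inter:
  assumes "\<CC> \<noteq> {}" "\<And>C. C \<in> \<CC> \<Longrightarrow> left_ideal K C" "\<Inter>\<CC> \<noteq> {}"
  shows "left_ideal K (\<Inter>\<CC>)"
  using assms unfolding left_ideal_def by blast

lemma closed_left_ideal_contains_minimal:
  assumes K: "subsemigroup K" "closed_beta K" and I: "left_ideal K I" "closed_beta I"
  shows "\<exists>L. minimal_left_ideal K L \<and> L \<subseteq> I"
proof -
  let ?A = "{C. closed_beta C \<and> left_ideal K C \<and> C \<subseteq> I}"
  have "\<exists>M\<in>?A. \<forall>C\<in>?A. C \<subseteq> M \<longrightarrow> C = M"
  proof (rule Zorn_minimal)
    fix \<CC> assume \<CC>: "\<CC> \<subseteq> ?A" "\<CC> \<noteq> {}" and chain: "\<forall>C\<in>\<CC>. \<forall>D\<in>\<CC>. C \<subseteq> D \<or> D \<subseteq> C"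
    have "\<Inter>\<CC> \<noteq> {}"
    proof (rule closed_beta_directed_Inter_nonempty[OF \<CC>(2)])
      fix C assume "C \<in> \<CC>"
      then show "closed_beta C \<and> C \<noteq> {}" using \<CC>(1) by (auto simp: left_ideal_def)
    next
      fix C D assume "C \<in> \<CC>" "D \<in> \<CC>"
      with chain consider "C \<subseteq> D" | "D \<subseteq> C" by blast
      then show "\<exists>E\<in>\<CC>. E \<subseteq> C \<inter> D"
        using \<open>C \<in> \<CC>\<close> \<open>D \<in> \<CC>\<close> by cases (simp_all add: Int_absorb1 Int_absorb2 bexI[of _ C] bexI[of _ D])
    qed
    moreover have "closed_beta (\<Inter>\<CC>)"
      using \<CC> by (intro closed_beta_Inter) auto
    moreover have "left_ideal K (\<Inter>\<CC>)"
      using \<CC> \<open>\<Inter>\<CC> \<noteq> {}\<close> by (intro left_ideal_Inter) auto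
    moreover have "\<Inter>\<CC> \<subseteq> I"
      using \<CC> by blast
    ultimately show "\<exists>L\<in>?A. \<forall>C\<in>\<CC>. L \<subseteq> C" by blast
  qed (use I in blast)
  then obtain M where M: "closed_beta M" "left_ideal K M" "M \<subseteq> I"
    and M_min: "\<And>C. C \<in> ?A \<Longrightarrow> C \<subseteq> M \<Longrightarrow> C = M" by blast
  have "minimal_left_ideal K M"
    unfolding minimal_left_ideal_def
  proof (intro conjI allI impI M(2))
    fix L assume L: "left_ideal K L \<and> L \<subseteq> M"
    then obtain q where "q \<in> L" "q \<in> K" by (auto simp: left_ideal_def)
    text \<open>Every left ideal contains a closed principal one, which by minimality of \<open>M\<close> is \<open>M\<close>.\<close>
    let ?Kq = "(\<lambda>r. bmult r q) ` K"
    have Kq_L: "?Kq \<subseteq> L" using L \<open>q \<in> L\<close> by (auto simp: left_ideal_def)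
    have "closed_beta ?Kq"
      using K(2) \<open>q \<in> K\<close> by (intro closed_beta_right_image) (auto simp: closed_beta_def)
    moreover have "left_ideal K ?Kq"
      using K(1) \<open>q \<in> K\<close> by (rule left_ideal_right_image)
    moreover have "?Kq \<subseteq> M" using Kq_L L by blast
    ultimately have "?Kq = M" using M(3) by (intro M_min) auto
    with Kq_L L show "L = M" by blast
  qed
  with M(3) show ?thesis by blast
qed

lemma F_proximal_imp_ultra_le:
  assumes "F_proximal F T x y"
  obtains p where "ultra p" "p \<le> F" "p \<le> near_diagonal (\<lambda>s. T s x) (\<lambda>s. T s y)"
proof -
  let ?N = "near_diagonal (\<lambda>s. T s x) (\<lambda>s. T s y)"
  have "inf F ?N \<noteq> bot"
  proof
    assume "inf F ?N = bot"
    then have "eventually (\<lambda>s. False) (inf F ?N)" by simp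
    then obtain Q R where Q: "eventually Q F" and R: "eventually R ?N"
      and QR: "\<forall>s. Q s \<and> R s \<longrightarrow> False"
      unfolding eventually_inf by blast
    from R obtain U where U: "open U" "\<forall>z. (z, z) \<in> U" "\<forall>s. (T s x, T s y) \<in> U \<longrightarrow> R s"
      unfolding eventually_near_diagonal by blast
    have "\<forall>A. eventually (\<lambda>s. s \<in> A) F \<longrightarrow> (\<exists>s\<in>A. (T s x, T s y) \<in> U)"
      using assms U(1,2) unfolding F_proximal_def by blast
    from this[rule_format, of "{s. Q s}"] Q have "\<exists>s. Q s \<and> (T s x, T s y) \<in> U"
      by simp
    with U(3) QR show False by blast
  qed
  then obtain p where "ultra p" "p \<le> inf F ?N" by (rule ultra_exists_le)
  with that show ?thesis by simp
qed

lemma F_proximal_imp_Tp_eq: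
  assumes T: "dynamical_system T" and "F_proximal F T x y"
  obtains p where "p \<in> Fbar F" "Tp T p x = Tp T p y"
proof -
  obtain p where p: "ultra p" "p \<le> F" "p \<le> near_diagonal (\<lambda>s. T s x) (\<lambda>s. T s y)"
    using F_proximal_imp_ultra_le[OF assms(2)] .
  have "Tp T p x = Tp T p y"
    using dynamical_system_compact[OF T] ultra_not_bot[OF p(1)] p(3)
      Tp_tendsto[OF T p(1)] Tp_tendsto[OF T p(1)]
    by (rule tendsto_unique_near_diagonal)
  moreover have "p \<in> Fbar F" using p by (simp add: Fbar_def betaS_def)
  ultimately show ?thesis using that by blast
qed

theorem lemma13:
  fixes F :: "'s::semigroup_mult filter"
    and T :: "'s \<Rightarrow> 'x::t2_space \<Rightarrow> 'x"
    and x y :: 'x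
  assumes "subsemigroup (Fbar F)"
    and "dynamical_system T"
    and "F_proximal F T x y"
  shows "\<exists>L. minimal_left_ideal (Fbar F) L \<and> (\<forall>u\<in>L. Tp T u x = Tp T u y)"
proof -
  obtain p where p: "p \<in> Fbar F" "Tp T p x = Tp T p y"
    using F_proximal_imp_Tp_eq[OF assms(2,3)] .
  have "left_ideal (Fbar F) ((\<lambda>r. bmult r p) ` Fbar F)"
    using assms(1) p(1) by (rule left_ideal_right_image)
  moreover have "closed_beta ((\<lambda>r. bmult r p) ` Fbar F)"
    using p(1) by (intro closed_beta_right_image[OF closed_beta_Fbar]) (simp add: Fbar_def)
  ultimately obtain L where L: "minimal_left_ideal (Fbar F) L" "L \<subseteq> (\<lambda>r. bmult r p) ` Fbar F"
    using closed_left_ideal_contains_minimal[OF assms(1) closed_beta_Fbar] by blast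
  have "Tp T u x = Tp T u y" if "u \<in> L" for u
  proof -
    obtain r where "r \<in> Fbar F" "u = bmult r p" using L(2) \<open>u \<in> L\<close> by blast
    then show ?thesis
      using Tp_bmult[OF assms(2)] p by (simp add: Fbar_def betaS_def)
  qed
  with L(1) show ?thesis by blast
qed

end
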